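(* For every $n\ge 1$, $d(L(n,2n-2)) \ge n^2 - \lfloor \frac{8n}{5}\rfloor$.
   Context: For positive integers $n,k$, let $\mathcal{L}_{n,k}$ be the set of $n\times n$ squares all of whose entries are colored with colors from a fixed set of $k$ colors $\{1,\dots,k\}$ such that any two entries in the same row, or in the same column, have different colors. A partial coloring of an $n\times n$ square assigns colors from $\{1,\dots,k\}$ to some of its entries; the remaining entries are called uncolored. A partial coloring extends to $L(n,k)$ if the uncolored entries can be colored so that the resulting fully colored square lies in $\mathcal{L}_{n,k}$ (keeping the given colors), and it uniquely extends to $L(n,k)$ if there is exactly one such way. A defining set of the $k$-coloring of an $n\times n$ square is the set of colored entries of a partial coloring that uniquely extends to $L(n,k)$; the defining number $d(L(n,k))$ is the minimum cardinality of such a defining set. *)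

theory Defs
  imports Complex_Main
begin

definition square :: "nat \<Rightarrow> (nat \<times> nat) set" where
  "square n = {..<n} \<times> {..<n}"

definition partial_coloring :: "nat \<Rightarrow> nat \<Rightarrow> (nat \<times> nat \<rightharpoonup> nat) \<Rightarrow> bool" where
  "partial_coloring n k P \<longleftrightarrow> dom P \<subseteq> square n \<and> ran P \<subseteq> {1..k}"

definition L_set :: "nat \<Rightarrow> nat \<Rightarrow> (nat \<times> nat \<rightharpoonup> nat) set" where
  "L_set n k = {f. dom f = square n \<and> ran f \<subseteq> {1..k} \<and>
     (\<forall>i<n. \<forall>j<n. \<forall>j'<n. j \<noteq> j' \<longrightarrow> f (i,j) \<noteq> f (i,j')) \<and>
     (\<forall>j<n. \<forall>i<n. \<forall>i'<n. i \<noteq> i' \<longrightarrow> f (i,j) \<noteq> f (i',j))}"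

definition uniquely_extends :: "nat \<Rightarrow> nat \<Rightarrow> (nat \<times> nat \<rightharpoonup> nat) \<Rightarrow> bool" where
  "uniquely_extends n k P \<longleftrightarrow> (\<exists>!f. f \<in> L_set n k \<and> P \<subseteq>\<^sub>m f)"

definition defining_number :: "nat \<Rightarrow> nat \<Rightarrow> nat" where
  "defining_number n k = Inf {card (dom P) | P. partial_coloring n k P \<and> uniquely_extends n k P}"

end

theory Submission
  imports Defs "HOL-Combinatorics.Permutations"
begin

text \<open>Let \<open>U\<close> be the set of uncoloured cells of a defining set and \<open>F\<close> its unique completion,
  so that no other Latin colouring agrees with \<open>F\<close> outside \<open>U\<close>. Recolouring a single cell
  of \<open>U\<close> shows that every colour occurs in its row or in its column; with \<open>2n - 2\<close> colours the
  row and the column of an uncoloured cell therefore share exactly two colours. Swapping two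
  entries of \<open>U\<close> in a line, cycling three of them, or rotating a \<open>2 \<times> 2\<close> rectangle of \<open>U\<close>
  must not produce a new Latin colouring either. Together this rules out three cells of \<open>U\<close>
  in a line, a rectangle, and a staircase of five cells. Seen as the edge set of the bipartite
  graph on rows and columns, \<open>U\<close> then consists of paths with at most four edges, and a
  weighted double count gives \<open>5 |U| \<le> 8 n\<close>.\<close>

lemma card_le_two_iff:
  assumes "finite A"
  shows "card A \<le> 2 \<longleftrightarrow> (\<forall>x\<in>A. \<forall>y\<in>A. \<forall>z\<in>A. x = y \<or> y = z \<or> x = z)"
proof
  assume "card A \<le> 2"
  show "\<forall>x\<in>A. \<forall>y\<in>A. \<forall>z\<in>A. x = y \<or> y = z \<or> x = z"
  proof (intro ballI, rule ccontr)
    fix x y z assume "x \<in> A" "y \<in> A" "z \<in> A" "\<not> (x = y \<or> y = z \<or> x = z)"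
    then have "card {x, y, z} = 3" by simp
    moreover have "card {x, y, z} \<le> card A"
      using assms \<open>x \<in> A\<close> \<open>y \<in> A\<close> \<open>z \<in> A\<close> by (intro card_mono) auto
    ultimately show False using \<open>card A \<le> 2\<close> by simp
  qed
next
  assume no_three: "\<forall>x\<in>A. \<forall>y\<in>A. \<forall>z\<in>A. x = y \<or> y = z \<or> x = z"
  show "card A \<le> 2"
  proof (rule ccontr)
    assume "\<not> card A \<le> 2"
    then obtain B where "B \<subseteq> A" "card B = 3"
      using obtain_subset_with_card_n[of 3 A] by auto
    then obtain x y z where "x \<in> A" "y \<in> A" "z \<in> A" "x \<noteq> y" "y \<noteq> z" "x \<noteq> z"
      by (auto simp: card_3_iff)
    with no_three show False by blast
  qed
qed

lemma card_2_other: "card A = 2 \<Longrightarrow> x \<in> A \<Longrightarrow> \<exists>y\<in>A. y \<noteq> x"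
  by (auto simp: card_2_iff)

section \<open>Sets of cells with at most two cells in each line\<close>

definition row_cells :: "(nat \<times> nat) set \<Rightarrow> nat \<Rightarrow> nat set" where
  "row_cells U i = {j. (i, j) \<in> U}"

definition col_cells :: "(nat \<times> nat) set \<Rightarrow> nat \<Rightarrow> nat set" where
  "col_cells U j = {i. (i, j) \<in> U}"

lemma row_cells_swap: "row_cells U i = col_cells (prod.swap ` U) i"
  and col_cells_swap: "col_cells U j = row_cells (prod.swap ` U) j"
  unfolding row_cells_def col_cells_def by force+

lemma finite_row_cells: "U \<subseteq> {..<n} \<times> {..<n} \<Longrightarrow> finite (row_cells U i)"
  unfolding row_cells_def by (rule finite_subset[of _ "{..<n}"]) auto

lemma finite_col_cells: "U \<subseteq> {..<n} \<times> {..<n} \<Longrightarrow> finite (col_cells U j)"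
  unfolding col_cells_def by (rule finite_subset[of _ "{..<n}"]) auto

lemma sum_row_weights_le:
  assumes "U \<subseteq> {..<n} \<times> {..<n}"
  shows "(\<Sum>u\<in>U. 3 - card (row_cells U (fst u))) \<le> 2 * n"
proof -
  let ?d = "\<lambda>i. card (row_cells U i)"
  have "U = Sigma {..<n} (row_cells U)"
    using assms unfolding row_cells_def by blast
  then have "(\<Sum>u\<in>U. 3 - ?d (fst u)) = (\<Sum>(i, j)\<in>Sigma {..<n} (row_cells U). 3 - ?d i)"
    by (simp add: case_prod_unfold)
  also have "\<dots> = (\<Sum>i<n. \<Sum>j\<in>row_cells U i. 3 - ?d i)"
    by (rule sum.Sigma[symmetric]) (simp_all add: finite_row_cells[OF assms])
  also have "\<dots> = (\<Sum>i<n. ?d i * (3 - ?d i))"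
    by simp
  also have "\<dots> \<le> (\<Sum>i<n. 2)"
  proof (rule sum_mono)
    have "m * (3 - m) \<le> 2" for m :: nat
      by (cases "m < 3") (auto simp: less_Suc_eq numeral_3_eq_3)
    then show "?d i * (3 - ?d i) \<le> 2" for i .
  qed
  finally show ?thesis by simp
qed

lemma sum_col_weights_le:
  assumes "U \<subseteq> {..<n} \<times> {..<n}"
  shows "(\<Sum>u\<in>U. 3 - card (col_cells U (snd u))) \<le> 2 * n"
proof -
  have "(\<Sum>u\<in>U. 3 - card (col_cells U (snd u))) = (\<Sum>u\<in>prod.swap ` U. 3 - card (row_cells (prod.swap ` U) (fst u)))"
    by (simp add: sum.reindex col_cells_swap)
  also have "\<dots> \<le> 2 * n"
    by (rule sum_row_weights_le) (use assms in auto)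
  finally show ?thesis .
qed

definition share_line :: "nat \<times> nat \<Rightarrow> nat \<times> nat \<Rightarrow> bool" where
  "share_line u v \<longleftrightarrow> u \<noteq> v \<and> (fst u = fst v \<or> snd u = snd v)"

definition inner_cell :: "(nat \<times> nat) set \<Rightarrow> nat \<times> nat \<Rightarrow> bool" where
  "inner_cell U u \<longleftrightarrow> card (row_cells U (fst u)) = 2 \<and> card (col_cells U (snd u)) = 2"

definition staircase_free :: "(nat \<times> nat) set \<Rightarrow> bool" where
  "staircase_free U \<longleftrightarrow> (\<forall>i0 i1 i2 j0 j1 j2.
     (i0, j0) \<in> U \<longrightarrow> (i1, j0) \<in> U \<longrightarrow> (i1, j1) \<in> U \<longrightarrow> (i2, j1) \<in> U \<longrightarrow> (i2, j2) \<in> U \<longrightarrow>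
     i0 = i1 \<or> i1 = i2 \<or> j0 = j1 \<or> j1 = j2)"

lemma share_line_swap: "share_line (prod.swap u) (prod.swap v) \<longleftrightarrow> share_line u v"
  by (auto simp: share_line_def prod_eq_iff)

lemma neighbour_unique_if_row_single:
  assumes U: "U \<subseteq> {..<n} \<times> {..<n}" "card (col_cells U b) \<le> 2"
    and v: "(a, b) \<in> U" "card (row_cells U a) = 1"
    and u: "u1 \<in> U" "u2 \<in> U" "share_line u1 (a, b)" "share_line u2 (a, b)"
  shows "u1 = u2"
proof -
  have in_row: "b \<in> row_cells U a" and in_col: "a \<in> col_cells U b"
    using v(1) by (simp_all add: row_cells_def col_cells_def)
  obtain x where x: "row_cells U a = {x}"
    using v(2) by (rule card_1_singletonE)
  have only_b: "j = b" if "(a, j) \<in> U" for j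
  proof -
    have "j \<in> row_cells U a" using that by (simp add: row_cells_def)
    with x in_row show ?thesis by simp
  qed
  have on_col: "snd u = b \<and> fst u \<noteq> a \<and> fst u \<in> col_cells U b" if "u \<in> U" "share_line u (a, b)" for u
  proof (cases u)
    case (Pair c d)
    with that only_b[of d] show ?thesis
      by (auto simp: share_line_def col_cells_def)
  qed
  have "fst u1 = fst u2"
    using on_col[OF u(1,3)] on_col[OF u(2,4)] card_le_two_iff[OF finite_col_cells[OF U(1)]] U(2) in_col
    by blast
  then show ?thesis
    using on_col[OF u(1,3)] on_col[OF u(2,4)] by (simp add: prod_eq_iff)
qed

lemma line_neighbour_unique:
  assumes U: "U \<subseteq> {..<n} \<times> {..<n}" "\<And>i. card (row_cells U i) \<le> 2" "\<And>j. card (col_cells U j) \<le> 2"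
    and v: "v \<in> U" "\<not> inner_cell U v"
    and u: "u1 \<in> U" "u2 \<in> U" "share_line u1 v" "share_line u2 v"
  shows "u1 = u2"
proof -
  obtain a b where v_eq: "v = (a, b)" by fastforce
  have "b \<in> row_cells U a" "a \<in> col_cells U b"
    using v(1) v_eq by (simp_all add: row_cells_def col_cells_def)
  then have "card (row_cells U a) \<noteq> 0" "card (col_cells U b) \<noteq> 0"
    using finite_row_cells[OF U(1)] finite_col_cells[OF U(1)] by auto
  moreover have "\<not> (card (row_cells U a) = 2 \<and> card (col_cells U b) = 2)"
    using v(2) v_eq by (simp add: inner_cell_def)
  ultimately have "card (row_cells U a) = 1 \<or> card (col_cells U b) = 1"
    using U(2)[of a] U(3)[of b] by linarith
  then show ?thesis
  proof
    assume "card (row_cells U a) = 1"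
    then show ?thesis
      using neighbour_unique_if_row_single[OF U(1) U(3)] v(1) u v_eq by blast
  next
    assume "card (col_cells U b) = 1"
    have "prod.swap u1 = prod.swap u2"
    proof (rule neighbour_unique_if_row_single[of "prod.swap ` U" n a b])
      show "prod.swap ` U \<subseteq> {..<n} \<times> {..<n}"
        using U(1) by auto
      show "card (col_cells (prod.swap ` U) a) \<le> 2"
        using U(2)[of a] by (simp only: row_cells_swap)
      show "card (row_cells (prod.swap ` U) b) = 1"
        using \<open>card (col_cells U b) = 1\<close> by (simp only: col_cells_swap)
      show "(b, a) \<in> prod.swap ` U" "prod.swap u1 \<in> prod.swap ` U" "prod.swap u2 \<in> prod.swap ` U"
        using v(1) v_eq u(1,2) by force+
      show "share_line (prod.swap u1) (b, a)" "share_line (prod.swap u2) (b, a)"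
        using u(3,4) v_eq share_line_swap[of _ v] by simp_all
    qed
    then show ?thesis
      by (metis swap_swap)
  qed
qed

lemma inner_cell_outer_neighbour:
  assumes "staircase_free U" and u: "u \<in> U" "inner_cell U u"
  shows "\<exists>v\<in>U. \<not> inner_cell U v \<and> share_line u v"
proof (rule ccontr)
  assume none: "\<not> ?thesis"
  obtain i j where u_eq: "u = (i, j)" by fastforce
  have "j \<in> row_cells U i" "card (row_cells U i) = 2"
    using u u_eq by (simp_all add: row_cells_def inner_cell_def)
  then obtain j' where "(i, j') \<in> U" "j' \<noteq> j"
    using card_2_other by (fastforce simp: row_cells_def)
  have "i \<in> col_cells U j" "card (col_cells U j) = 2"
    using u u_eq by (simp_all add: col_cells_def inner_cell_def)
  then obtain i' where "(i', j) \<in> U" "i' \<noteq> i"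
    using card_2_other by (fastforce simp: col_cells_def)
  have "inner_cell U (i, j')" "inner_cell U (i', j)"
    using none u_eq \<open>(i, j') \<in> U\<close> \<open>j' \<noteq> j\<close> \<open>(i', j) \<in> U\<close> \<open>i' \<noteq> i\<close> by (auto simp: share_line_def)
  have "i \<in> col_cells U j'" "card (col_cells U j') = 2"
    using \<open>(i, j') \<in> U\<close> \<open>inner_cell U (i, j')\<close> by (simp_all add: col_cells_def inner_cell_def)
  then obtain i'' where "(i'', j') \<in> U" "i'' \<noteq> i"
    using card_2_other by (fastforce simp: col_cells_def)
  have "j \<in> row_cells U i'" "card (row_cells U i') = 2"
    using \<open>(i', j) \<in> U\<close> \<open>inner_cell U (i', j)\<close> by (simp_all add: row_cells_def inner_cell_def)
  then obtain j'' where "(i', j'') \<in> U" "j'' \<noteq> j"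
    using card_2_other by (fastforce simp: row_cells_def)
  moreover have "(i, j) \<in> U"
    using u(1) u_eq by simp
  ultimately show False
    using \<open>staircase_free U\<close> \<open>(i'', j') \<in> U\<close> \<open>(i, j') \<in> U\<close> \<open>(i', j) \<in> U\<close>
      \<open>i'' \<noteq> i\<close> \<open>i' \<noteq> i\<close> \<open>j' \<noteq> j\<close>
    unfolding staircase_free_def by blast
qed

lemma card_inner_cells_le:
  assumes U: "U \<subseteq> {..<n} \<times> {..<n}" "\<And>i. card (row_cells U i) \<le> 2" "\<And>j. card (col_cells U j) \<le> 2"
    and "staircase_free U"
  shows "card {u\<in>U. inner_cell U u} \<le> card {u\<in>U. \<not> inner_cell U u}"
proof -
  let ?M = "{u\<in>U. inner_cell U u}" and ?N = "{u\<in>U. \<not> inner_cell U u}"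
  define neighbour where "neighbour u = (SOME v. v \<in> ?N \<and> share_line u v)" for u
  have neighbour: "neighbour u \<in> ?N \<and> share_line u (neighbour u)" if "u \<in> ?M" for u
    unfolding neighbour_def
    by (rule someI_ex) (use inner_cell_outer_neighbour[OF assms(4), of u] that in blast)
  have "inj_on neighbour ?M"
  proof (rule inj_onI)
    fix u1 u2 assume "u1 \<in> ?M" "u2 \<in> ?M" "neighbour u1 = neighbour u2"
    then show "u1 = u2"
      using line_neighbour_unique[OF U, of "neighbour u1" u1 u2] neighbour[of u1] neighbour[of u2]
      by auto
  qed
  moreover have "neighbour ` ?M \<subseteq> ?N"
    using neighbour by blast
  moreover have "finite ?N"
    using U(1) by (auto intro: finite_subset)
  ultimately show ?thesis
    by (rule card_inj_on_le)
qed

lemma card_staircase_free_le: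
  assumes U: "U \<subseteq> {..<n} \<times> {..<n}" "\<And>i. card (row_cells U i) \<le> 2" "\<And>j. card (col_cells U j) \<le> 2"
    and "staircase_free U"
  shows "5 * card U \<le> 8 * n"
proof -
  \<comment> \<open>Each line carries total weight at most 2, spread as \<open>3 - d\<close> over its \<open>d\<close> cells. A cell
     gets at least 3 unless it is inner, and inner cells inject into the others.\<close>
  let ?M = "{u\<in>U. inner_cell U u}" and ?N = "{u\<in>U. \<not> inner_cell U u}"
  let ?dr = "\<lambda>u. card (row_cells U (fst u))" and ?dc = "\<lambda>u. card (col_cells U (snd u))"
  let ?w = "\<lambda>u. (3 - ?dr u) + (3 - ?dc u)"
  have fin: "finite U"
    using U(1) by (rule finite_subset) simp
  have "?dr u \<noteq> 0 \<and> ?dc u \<noteq> 0" if "u \<in> U" for u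
  proof -
    have "snd u \<in> row_cells U (fst u)" "fst u \<in> col_cells U (snd u)"
      using that by (simp_all add: row_cells_def col_cells_def)
    then show ?thesis
      using finite_row_cells[OF U(1)] finite_col_cells[OF U(1)] by auto
  qed
  note degree_pos = this
  have w_inner: "2 \<le> ?w u" if "u \<in> U" for u
    using that U(2)[of "fst u"] U(3)[of "snd u"] by auto
  have w_outer: "3 \<le> ?w u" if "u \<in> ?N" for u
    using that degree_pos[of u] U(2)[of "fst u"] U(3)[of "snd u"] by (auto simp: inner_cell_def)
  have "2 * card ?M + 3 * card ?N \<le> (\<Sum>u\<in>?M. ?w u) + (\<Sum>u\<in>?N. ?w u)"
    using sum_bounded_below[of ?M 2 ?w] sum_bounded_below[of ?N 3 ?w] w_inner w_outer
    by (simp add: mult.commute add_mono)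
  also have "\<dots> = (\<Sum>u\<in>U. ?w u)"
    using fin by (subst sum.union_disjoint[symmetric]) (auto intro: sum.cong)
  also have "\<dots> = (\<Sum>u\<in>U. 3 - ?dr u) + (\<Sum>u\<in>U. 3 - ?dc u)"
    by (rule sum.distrib)
  also have "\<dots> \<le> 4 * n"
    using sum_row_weights_le[OF U(1)] sum_col_weights_le[OF U(1)] by simp
  finally have "2 * card ?M + 3 * card ?N \<le> 4 * n" .
  moreover have "card U = card ?M + card ?N"
    using fin by (subst card_Un_disjoint[symmetric]) (auto intro: arg_cong[where f = card])
  moreover have "card ?M \<le> card ?N"
    by (rule card_inner_cells_le[OF assms])
  ultimately show ?thesis
    by linarith
qed

section \<open>Latin squares determined outside a set of cells\<close>

definition latin :: "nat \<Rightarrow> nat \<Rightarrow> (nat \<Rightarrow> nat \<Rightarrow> nat) \<Rightarrow> bool" where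
  "latin n k F \<longleftrightarrow> (\<forall>i<n. \<forall>j<n. F i j \<in> {1..k}) \<and>
     (\<forall>i<n. \<forall>j<n. \<forall>j'<n. j \<noteq> j' \<longrightarrow> F i j \<noteq> F i j') \<and>
     (\<forall>j<n. \<forall>i<n. \<forall>i'<n. i \<noteq> i' \<longrightarrow> F i j \<noteq> F i' j)"

lemma latinI:
  assumes "\<And>i j. i < n \<Longrightarrow> j < n \<Longrightarrow> F i j \<in> {1..k}"
    and "\<And>i j j'. i < n \<Longrightarrow> j < n \<Longrightarrow> j' < n \<Longrightarrow> j \<noteq> j' \<Longrightarrow> F i j \<noteq> F i j'"
    and "\<And>i i' j. i < n \<Longrightarrow> i' < n \<Longrightarrow> j < n \<Longrightarrow> i \<noteq> i' \<Longrightarrow> F i j \<noteq> F i' j"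
  shows "latin n k F"
  using assms unfolding latin_def by blast

lemma latin_range: "latin n k F \<Longrightarrow> i < n \<Longrightarrow> j < n \<Longrightarrow> F i j \<in> {1..k}"
  unfolding latin_def by blast

lemma latin_row_distinct: "latin n k F \<Longrightarrow> i < n \<Longrightarrow> j < n \<Longrightarrow> j' < n \<Longrightarrow> j \<noteq> j' \<Longrightarrow> F i j \<noteq> F i j'"
  unfolding latin_def by blast

lemma latin_col_distinct: "latin n k F \<Longrightarrow> i < n \<Longrightarrow> i' < n \<Longrightarrow> j < n \<Longrightarrow> i \<noteq> i' \<Longrightarrow> F i j \<noteq> F i' j"
  unfolding latin_def by blast

lemma latin_transpose: "latin n k F \<Longrightarrow> latin n k (\<lambda>i j. F j i)"
  unfolding latin_def by blast

lemma latin_update: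
  assumes "latin n k F"
    and same: "\<And>i j. (i, j) \<notin> S \<Longrightarrow> G i j = F i j"
    and range: "\<And>i j. (i, j) \<in> S \<Longrightarrow> G i j \<in> {1..k}"
    and row: "\<And>i j j'. (i, j) \<in> S \<Longrightarrow> i < n \<Longrightarrow> j < n \<Longrightarrow> j' < n \<Longrightarrow> j' \<noteq> j \<Longrightarrow> G i j \<noteq> G i j'"
    and col: "\<And>i i' j. (i, j) \<in> S \<Longrightarrow> i < n \<Longrightarrow> j < n \<Longrightarrow> i' < n \<Longrightarrow> i' \<noteq> i \<Longrightarrow> G i j \<noteq> G i' j"
  shows "latin n k G"
proof (rule latinI)
  show "G i j \<in> {1..k}" if "i < n" "j < n" for i j
    using that same range latin_range[OF assms(1)] by (cases "(i, j) \<in> S") auto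
  show "G i j \<noteq> G i j'" if "i < n" "j < n" "j' < n" "j \<noteq> j'" for i j j'
    using that same row[of i j j'] row[of i j' j] latin_row_distinct[OF assms(1)] by metis
  show "G i j \<noteq> G i' j" if "i < n" "i' < n" "j < n" "i \<noteq> i'" for i i' j
    using that same col[of i j i'] col[of i' j i] latin_col_distinct[OF assms(1)] by metis
qed

definition row_colors :: "(nat \<Rightarrow> nat \<Rightarrow> nat) \<Rightarrow> nat \<Rightarrow> nat \<Rightarrow> nat set" where
  "row_colors F n i = (\<lambda>j. F i j) ` {..<n}"

definition col_colors :: "(nat \<Rightarrow> nat \<Rightarrow> nat) \<Rightarrow> nat \<Rightarrow> nat \<Rightarrow> nat set" where
  "col_colors F n j = (\<lambda>i. F i j) ` {..<n}"

lemma row_colors_iff: "c \<in> row_colors F n i \<longleftrightarrow> (\<exists>j<n. F i j = c)"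
  unfolding row_colors_def by auto

lemma col_colors_iff: "c \<in> col_colors F n j \<longleftrightarrow> (\<exists>i<n. F i j = c)"
  unfolding col_colors_def by auto

lemma row_colorsI: "j < n \<Longrightarrow> F i j \<in> row_colors F n i"
  and col_colorsI: "i < n \<Longrightarrow> F i j \<in> col_colors F n j"
  unfolding row_colors_def col_colors_def by simp_all

lemma col_colors_transpose: "col_colors (\<lambda>i j. F j i) n j = row_colors F n j"
  unfolding row_colors_def col_colors_def by simp

lemma card_row_colors: "latin n k F \<Longrightarrow> i < n \<Longrightarrow> card (row_colors F n i) = n"
  unfolding row_colors_def
  by (subst card_image) (auto intro: inj_onI dest: latin_row_distinct)

lemma card_col_colors: "latin n k F \<Longrightarrow> j < n \<Longrightarrow> card (col_colors F n j) = n"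
  unfolding col_colors_def
  by (subst card_image) (auto intro: inj_onI dest: latin_col_distinct)

lemma row_colors_subset: "latin n k F \<Longrightarrow> i < n \<Longrightarrow> row_colors F n i \<subseteq> {1..k}"
  and col_colors_subset: "latin n k F \<Longrightarrow> j < n \<Longrightarrow> col_colors F n j \<subseteq> {1..k}"
  unfolding row_colors_def col_colors_def by (auto dest: latin_range)

definition determined :: "nat \<Rightarrow> nat \<Rightarrow> (nat \<Rightarrow> nat \<Rightarrow> nat) \<Rightarrow> (nat \<times> nat) set \<Rightarrow> bool" where
  "determined n k F U \<longleftrightarrow> latin n k F \<and> (\<forall>G. latin n k G \<longrightarrow>
      (\<forall>i<n. \<forall>j<n. (i, j) \<notin> U \<longrightarrow> G i j = F i j) \<longrightarrow> (\<forall>i<n. \<forall>j<n. G i j = F i j))"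

lemma determined_latin: "determined n k F U \<Longrightarrow> latin n k F"
  unfolding determined_def by blast

lemma determined_eq:
  assumes "determined n k F U" "latin n k G"
    and "\<And>i j. i < n \<Longrightarrow> j < n \<Longrightarrow> (i, j) \<notin> U \<Longrightarrow> G i j = F i j"
    and "i < n" "j < n"
  shows "G i j = F i j"
  using assms unfolding determined_def by blast

lemma determined_transpose:
  assumes "determined n k F U"
  shows "determined n k (\<lambda>i j. F j i) (prod.swap ` U)"
  unfolding determined_def
proof (intro conjI allI impI)
  show "latin n k (\<lambda>i j. F j i)"
    using assms determined_latin latin_transpose by blast
  fix G i j
  assume "latin n k G" and agree: "\<forall>i<n. \<forall>j<n. (i, j) \<notin> prod.swap ` U \<longrightarrow> G i j = F j i"
    and "i < n" "j < n"
  have "G i j = F j i" if "i < n" "j < n" for i j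
    using determined_eq[OF assms latin_transpose[OF \<open>latin n k G\<close>], of j i] agree that
    by (force simp: image_iff)
  then show "G i j = F j i" using \<open>i < n\<close> \<open>j < n\<close> .
qed

lemma determined_cell_cover:
  assumes det: "determined n k F U" and "(i, j) \<in> U" "i < n" "j < n" and "c \<in> {1..k}"
  shows "c \<in> row_colors F n i \<or> c \<in> col_colors F n j"
proof (rule ccontr)
  assume "\<not> ?thesis"
  then have fresh: "\<And>b. b < n \<Longrightarrow> F i b \<noteq> c" "\<And>a. a < n \<Longrightarrow> F a j \<noteq> c"
    by (auto simp: row_colors_iff col_colors_iff)
  define G where "G = (\<lambda>a b. if (a, b) = (i, j) then c else F a b)"
  have "latin n k G"
  proof (rule latin_update[OF determined_latin[OF det], where S = "{(i, j)}"])
    show "G a b = F a b" if "(a, b) \<notin> {(i, j)}" for a b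
      using that by (auto simp: G_def)
    show "G a b \<in> {1..k}" if "(a, b) \<in> {(i, j)}" for a b
      using that \<open>c \<in> {1..k}\<close> by (simp add: G_def)
    show "G a b \<noteq> G a b'" if "(a, b) \<in> {(i, j)}" "b' < n" "b' \<noteq> b" for a b b'
      using that fresh(1)[of b'] by (simp add: G_def)
    show "G a b \<noteq> G a' b" if "(a, b) \<in> {(i, j)}" "a' < n" "a' \<noteq> a" for a a' b
      using that fresh(2)[of a'] by (simp add: G_def)
  qed
  then have "G i j = F i j"
    by (rule determined_eq[OF det]) (use assms(2-4) in \<open>auto simp: G_def\<close>)
  then show False
    using fresh(1)[OF \<open>j < n\<close>] by (simp add: G_def)
qed

definition permute_row :: "(nat \<Rightarrow> nat \<Rightarrow> nat) \<Rightarrow> nat \<Rightarrow> (nat \<Rightarrow> nat) \<Rightarrow> nat \<Rightarrow> nat \<Rightarrow> nat" where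
  "permute_row F i p = (\<lambda>a b. if a = i then F i (p b) else F a b)"

lemma latin_permute_row:
  assumes L: "latin n k F" and "i < n" "J \<subseteq> {..<n}" and p: "p permutes J"
    and fresh: "\<And>j a. j \<in> J \<Longrightarrow> p j \<noteq> j \<Longrightarrow> a < n \<Longrightarrow> a \<noteq> i \<Longrightarrow> F a j \<noteq> F i (p j)"
  shows "latin n k (permute_row F i p)"
proof -
  have p_lt: "p b < n" if "b < n" for b
    using that assms(3) permutes_in_image[OF p] permutes_not_in[OF p] by (metis lessThan_iff subsetD)
  show ?thesis
  proof (rule latin_update[OF L, where S = "{i} \<times> J"])
    show "permute_row F i p a b = F a b" if "(a, b) \<notin> {i} \<times> J" for a b
      using that permutes_not_in[OF p] by (auto simp: permute_row_def)
    show "permute_row F i p a b \<in> {1..k}" if "(a, b) \<in> {i} \<times> J" for a b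
      using that assms(3) p_lt latin_range[OF L \<open>i < n\<close>] by (auto simp: permute_row_def)
    show "permute_row F i p a b \<noteq> permute_row F i p a b'"
      if "(a, b) \<in> {i} \<times> J" "b < n" "b' < n" "b' \<noteq> b" for a b b'
      using that latin_row_distinct[OF L \<open>i < n\<close> p_lt p_lt] permutes_inj[OF p]
      by (auto simp: permute_row_def inj_eq)
    show "permute_row F i p a b \<noteq> permute_row F i p a' b"
      if "(a, b) \<in> {i} \<times> J" "a < n" "b < n" "a' < n" "a' \<noteq> a" for a a' b
      using that fresh[of b a'] latin_col_distinct[OF L, of a' i b]
      by (cases "p b = b") (auto simp: permute_row_def)
  qed
qed

lemma determined_row_permutation:
  assumes det: "determined n k F U" and "i < n" "J \<subseteq> {..<n}" "{i} \<times> J \<subseteq> U"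
    and p: "p permutes J" "p \<noteq> id"
  shows "\<exists>j\<in>J. p j \<noteq> j \<and> F i (p j) \<in> col_colors F n j"
proof (rule ccontr)
  have L: "latin n k F" using det by (rule determined_latin)
  assume "\<not> ?thesis"
  then have "latin n k (permute_row F i p)"
    by (intro latin_permute_row[OF L assms(2,3) p(1)]) (auto simp: col_colors_iff)
  moreover have "permute_row F i p a b = F a b" if "(a, b) \<notin> U" for a b
    using that assms(4) permutes_not_in[OF p(1)] by (cases "b \<in> J") (auto simp: permute_row_def)
  ultimately have "F i (p j) = F i j" if "j < n" for j
    using determined_eq[OF det, of "permute_row F i p" i j] that \<open>i < n\<close> by (simp add: permute_row_def)
  then have "p j = j" for j
    using latin_row_distinct[OF L \<open>i < n\<close>] permutes_in_image[OF p(1)] permutes_not_in[OF p(1)] assms(3)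
    by (metis lessThan_iff subsetD)
  with p(2) show False by auto
qed

lemma determined_row_swap:
  assumes "determined n k F U" "i < n" "j < n" "j' < n" "j \<noteq> j'" "(i, j) \<in> U" "(i, j') \<in> U"
  shows "F i j' \<in> col_colors F n j \<or> F i j \<in> col_colors F n j'"
proof -
  have "transpose j j' permutes {j, j'}"
    by (rule permutes_swap_id) auto
  moreover have "transpose j j' \<noteq> id"
    using \<open>j \<noteq> j'\<close> by (metis id_apply transpose_apply_first)
  ultimately show ?thesis
    using determined_row_permutation[OF assms(1,2), of "{j, j'}" "transpose j j'"] assms(3-) by auto
qed

lemma determined_row_rotation:
  assumes "determined n k F U" "i < n" "j1 < n" "j2 < n" "j3 < n"
    "j1 \<noteq> j2" "j2 \<noteq> j3" "j1 \<noteq> j3" "(i, j1) \<in> U" "(i, j2) \<in> U" "(i, j3) \<in> U"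
  shows "F i j2 \<in> col_colors F n j1 \<or> F i j3 \<in> col_colors F n j2 \<or> F i j1 \<in> col_colors F n j3"
proof -
  let ?p = "transpose j1 j2 \<circ> transpose j2 j3"
  have "?p permutes {j1, j2, j3}"
    by (intro permutes_compose permutes_swap_id) auto
  moreover have "?p j1 = j2" "?p j2 = j3" "?p j3 = j1"
    using assms(6-8) by (auto simp: transpose_def)
  moreover from this have "?p \<noteq> id"
    using \<open>j1 \<noteq> j2\<close> by (metis id_apply)
  ultimately show ?thesis
    using determined_row_permutation[OF assms(1,2), of "{j1, j2, j3}" ?p] assms(3-) by auto
qed

lemma determined_col_swap:
  assumes "determined n k F U" "j < n" "i < n" "i' < n" "i \<noteq> i'" "(i, j) \<in> U" "(i', j) \<in> U"
  shows "F i' j \<in> row_colors F n i \<or> F i j \<in> row_colors F n i'"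
  using determined_row_swap[OF determined_transpose[OF assms(1)] assms(2-5)] assms(6,7)
  by (force simp: col_colors_transpose)

definition rotate_rectangle :: "(nat \<Rightarrow> nat \<Rightarrow> nat) \<Rightarrow> nat \<Rightarrow> nat \<Rightarrow> nat \<Rightarrow> nat \<Rightarrow> nat \<Rightarrow> nat \<Rightarrow> nat" where
  "rotate_rectangle F i1 i2 j1 j2 = (\<lambda>a b.
    if (a, b) = (i1, j1) then F i1 j2 else if (a, b) = (i1, j2) then F i2 j2
    else if (a, b) = (i2, j2) then F i2 j1 else if (a, b) = (i2, j1) then F i1 j1 else F a b)"

lemma latin_rotate_rectangle:
  assumes L: "latin n k F" and ij: "i1 < n" "i2 < n" "i1 \<noteq> i2" "j1 < n" "j2 < n" "j1 \<noteq> j2"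
    and fresh1: "\<And>a. a < n \<Longrightarrow> a \<noteq> i2 \<Longrightarrow> F a j1 \<noteq> F i1 j2"
    and fresh2: "\<And>b. b < n \<Longrightarrow> b \<noteq> j1 \<Longrightarrow> F i1 b \<noteq> F i2 j2"
    and fresh3: "\<And>a. a < n \<Longrightarrow> a \<noteq> i1 \<Longrightarrow> F a j2 \<noteq> F i2 j1"
    and fresh4: "\<And>b. b < n \<Longrightarrow> b \<noteq> j2 \<Longrightarrow> F i2 b \<noteq> F i1 j1"
  shows "latin n k (rotate_rectangle F i1 i2 j1 j2)"
proof -
  let ?G = "rotate_rectangle F i1 i2 j1 j2" and ?S = "{(i1, j1), (i1, j2), (i2, j2), (i2, j1)}"
  note row = latin_row_distinct[OF L] and col = latin_col_distinct[OF L]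
  have G_rect: "?G i1 j1 = F i1 j2" "?G i1 j2 = F i2 j2" "?G i2 j2 = F i2 j1" "?G i2 j1 = F i1 j1"
    using ij(3,6) by (auto simp: rotate_rectangle_def)
  have G_out: "?G a b = F a b" if "(a, b) \<notin> ?S" for a b
    using that by (auto simp: rotate_rectangle_def)
  show ?thesis
  proof (rule latin_update[OF L G_out])
    show "?G a b \<in> {1..k}" if "(a, b) \<in> ?S" for a b
      using that latin_range[OF L] ij by (auto simp: G_rect)
    show "?G a b \<noteq> ?G a b'" if "(a, b) \<in> ?S" "a < n" "b < n" "b' < n" "b' \<noteq> b" for a b b'
    proof (cases "b' \<in> {j1, j2}")
      case True
      then show ?thesis
        using that col[of i1 i2 j2] col[of i1 i2 j1] ij by (auto simp: G_rect)
    next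
      case False
      then show ?thesis
        using that row[of i1 b' j2] row[of i2 b' j1] fresh2[of b'] fresh4[of b'] ij
        by (auto simp: G_rect G_out)
    qed
    show "?G a b \<noteq> ?G a' b" if "(a, b) \<in> ?S" "a < n" "b < n" "a' < n" "a' \<noteq> a" for a a' b
    proof (cases "a' \<in> {i1, i2}")
      case True
      then show ?thesis
        using that row[of i1 j1 j2] row[of i2 j1 j2] ij by (auto simp: G_rect)
    next
      case False
      then show ?thesis
        using that col[of a' i2 j2] col[of a' i1 j1] fresh1[of a'] fresh3[of a'] ij
        by (auto simp: G_rect G_out)
    qed
  qed
qed

lemma determined_rectangle_rotation:
  assumes det: "determined n k F U" and ij: "i1 < n" "i2 < n" "i1 \<noteq> i2" "j1 < n" "j2 < n" "j1 \<noteq> j2"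
    and "{(i1, j1), (i1, j2), (i2, j2), (i2, j1)} \<subseteq> U"
  shows "(F i1 j2 \<in> col_colors F n j1 \<and> F i1 j2 \<noteq> F i2 j1) \<or>
    (F i2 j2 \<in> row_colors F n i1 \<and> F i2 j2 \<noteq> F i1 j1) \<or>
    (F i2 j1 \<in> col_colors F n j2 \<and> F i2 j1 \<noteq> F i1 j2) \<or>
    (F i1 j1 \<in> row_colors F n i2 \<and> F i1 j1 \<noteq> F i2 j2)"
proof (rule ccontr)
  have L: "latin n k F" using det by (rule determined_latin)
  note row = latin_row_distinct[OF L] and col = latin_col_distinct[OF L]
  assume none: "\<not> ?thesis"
  have "latin n k (rotate_rectangle F i1 i2 j1 j2)"
  proof (rule latin_rotate_rectangle[OF L ij])
    show "F a j1 \<noteq> F i1 j2" if "a < n" "a \<noteq> i2" for a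
      using none col[OF that(1) \<open>i2 < n\<close> \<open>j1 < n\<close> that(2)] col_colorsI[OF that(1), of F j1] by metis
    show "F i1 b \<noteq> F i2 j2" if "b < n" "b \<noteq> j1" for b
      using none row[OF \<open>i1 < n\<close> that(1) \<open>j1 < n\<close> that(2)] row_colorsI[OF that(1), of F i1] by metis
    show "F a j2 \<noteq> F i2 j1" if "a < n" "a \<noteq> i1" for a
      using none col[OF that(1) \<open>i1 < n\<close> \<open>j2 < n\<close> that(2)] col_colorsI[OF that(1), of F j2] by metis
    show "F i2 b \<noteq> F i1 j1" if "b < n" "b \<noteq> j2" for b
      using none row[OF \<open>i2 < n\<close> that(1) \<open>j2 < n\<close> that(2)] row_colorsI[OF that(1), of F i2] by metis
  qed
  moreover have "rotate_rectangle F i1 i2 j1 j2 a b = F a b" if "(a, b) \<notin> U" for a b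
    using that assms(8) by (auto simp: rotate_rectangle_def)
  ultimately have "rotate_rectangle F i1 i2 j1 j2 i1 j1 = F i1 j1"
    using determined_eq[OF det] \<open>i1 < n\<close> \<open>j1 < n\<close> by blast
  then show False
    using row[OF \<open>i1 < n\<close> \<open>j2 < n\<close> \<open>j1 < n\<close>] \<open>j1 \<noteq> j2\<close> by (simp add: rotate_rectangle_def)
qed

section \<open>Uncoloured cells when there are 2n - 2 colours\<close>

lemma card_common_colors:
  assumes det: "determined n (2 * n - 2) F U" and "(i, j) \<in> U" "i < n" "j < n"
  shows "card (row_colors F n i \<inter> col_colors F n j) = 2"
proof -
  let ?R = "row_colors F n i" and ?C = "col_colors F n j"
  have L: "latin n (2 * n - 2) F" using det by (rule determined_latin)
  have "?R \<union> ?C = {1..2 * n - 2}"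
    using determined_cell_cover[OF assms] row_colors_subset[OF L \<open>i < n\<close>]
      col_colors_subset[OF L \<open>j < n\<close>] by blast
  moreover have "card ?R + card ?C = card (?R \<union> ?C) + card (?R \<inter> ?C)"
    by (rule card_Un_Int) (simp_all add: row_colors_def col_colors_def)
  ultimately show ?thesis
    using card_row_colors[OF L \<open>i < n\<close>] card_col_colors[OF L \<open>j < n\<close>] \<open>i < n\<close> by simp
qed

lemma common_colors_at_most_two:
  assumes "determined n (2 * n - 2) F U" "(i, j) \<in> U" "i < n" "j < n"
    and "x \<in> row_colors F n i" "x \<in> col_colors F n j"
    and "y \<in> row_colors F n i" "y \<in> col_colors F n j"
    and "z \<in> row_colors F n i" "z \<in> col_colors F n j"
  shows "x = y \<or> y = z \<or> x = z"
proof -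
  have "finite (row_colors F n i \<inter> col_colors F n j)"
    by (simp add: row_colors_def)
  then show ?thesis
    using card_common_colors[OF assms(1-4)] card_le_two_iff assms(5-) by (metis IntI order.refl)
qed

lemma no_three_uncolored_in_row:
  assumes det: "determined n (2 * n - 2) F U" and "i < n" "j1 < n" "j2 < n" "j3 < n"
    and "j1 \<noteq> j2" "j2 \<noteq> j3" "j1 \<noteq> j3" "(i, j1) \<in> U" "(i, j2) \<in> U" "(i, j3) \<in> U"
  shows False
proof -
  have L: "latin n (2 * n - 2) F" using det by (rule determined_latin)
  let ?C = "col_colors F n"
  have in_row: "F i j1 \<in> row_colors F n i" "F i j2 \<in> row_colors F n i" "F i j3 \<in> row_colors F n i"
    using assms(3-5) by (auto intro: row_colorsI)
  have in_col: "F i j1 \<in> ?C j1" "F i j2 \<in> ?C j2" "F i j3 \<in> ?C j3"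
    using \<open>i < n\<close> by (auto intro: col_colorsI)
  have distinct: "F i j1 \<noteq> F i j2" "F i j2 \<noteq> F i j3" "F i j1 \<noteq> F i j3"
    using latin_row_distinct[OF L \<open>i < n\<close>] assms(3-8) by auto
  note at_most_two = common_colors_at_most_two[OF det _ \<open>i < n\<close>]
  have at_most_one:
    "\<not> (F i j2 \<in> ?C j1 \<and> F i j3 \<in> ?C j1)"
    "\<not> (F i j1 \<in> ?C j2 \<and> F i j3 \<in> ?C j2)"
    "\<not> (F i j1 \<in> ?C j3 \<and> F i j2 \<in> ?C j3)"
    using at_most_two[OF assms(9,3) in_row(1) in_col(1) in_row(2) _ in_row(3)]
      at_most_two[OF assms(10,4) in_row(2) in_col(2) in_row(1) _ in_row(3)]
      at_most_two[OF assms(11,5) in_row(3) in_col(3) in_row(1) _ in_row(2)] distinct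
    by auto
  have swaps:
    "F i j2 \<in> ?C j1 \<or> F i j1 \<in> ?C j2"
    "F i j3 \<in> ?C j2 \<or> F i j2 \<in> ?C j3"
    "F i j3 \<in> ?C j1 \<or> F i j1 \<in> ?C j3"
    using determined_row_swap[OF det \<open>i < n\<close>] assms(3-) by simp_all
  have rotations:
    "F i j2 \<in> ?C j1 \<or> F i j3 \<in> ?C j2 \<or> F i j1 \<in> ?C j3"
    "F i j3 \<in> ?C j1 \<or> F i j2 \<in> ?C j3 \<or> F i j1 \<in> ?C j2"
    using determined_row_rotation[OF det \<open>i < n\<close>, of j1 j2 j3]
      determined_row_rotation[OF det \<open>i < n\<close>, of j1 j3 j2] assms(3-)
    by simp_all
  \<comment> \<open>Reading \<open>F i j' \<in> ?C j\<close> as an arc \<open>j \<rightarrow> j'\<close>: every vertex has out-degree at most one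
     and every pair is joined, so the arcs form a directed triangle; but the two rotations
     demand arcs of both orientations.\<close>
  show False
    using at_most_one swaps rotations by blast
qed

lemma no_three_uncolored_in_col:
  assumes det: "determined n (2 * n - 2) F U" and "j < n" "i1 < n" "i2 < n" "i3 < n"
    and "i1 \<noteq> i2" "i2 \<noteq> i3" "i1 \<noteq> i3" "(i1, j) \<in> U" "(i2, j) \<in> U" "(i3, j) \<in> U"
  shows False
  using no_three_uncolored_in_row[OF determined_transpose[OF det] assms(2-8)] assms(9-)
  by (force simp: image_iff)

lemma no_uncolored_rectangle:
  assumes det: "determined n (2 * n - 2) F U" and "i1 < n" "i2 < n" "i1 \<noteq> i2" "j1 < n" "j2 < n" "j1 \<noteq> j2"
    and U: "{(i1, j1), (i1, j2), (i2, j2), (i2, j1)} \<subseteq> U"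
  shows False
proof -
  have L: "latin n (2 * n - 2) F" using det by (rule determined_latin)
  note rc = row_colorsI[of _ n F] col_colorsI[of _ n F]
  have distinct: "F i1 j1 \<noteq> F i1 j2" "F i1 j2 \<noteq> F i2 j2" "F i2 j2 \<noteq> F i2 j1" "F i2 j1 \<noteq> F i1 j1"
    using latin_row_distinct[OF L] latin_col_distinct[OF L] assms(2-7) by metis+
  have cells: "(i1, j1) \<in> U" "(i1, j2) \<in> U" "(i2, j2) \<in> U" "(i2, j1) \<in> U"
    using U by auto
  note at_most_two = common_colors_at_most_two[OF det]
  have swaps:
    "F i1 j2 \<in> col_colors F n j1 \<or> F i1 j1 \<in> col_colors F n j2"
    "F i2 j2 \<in> row_colors F n i1 \<or> F i1 j2 \<in> row_colors F n i2"
    "F i2 j1 \<in> col_colors F n j2 \<or> F i2 j2 \<in> col_colors F n j1"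
    "F i1 j1 \<in> row_colors F n i2 \<or> F i2 j1 \<in> row_colors F n i1"
    using determined_row_swap[OF det] determined_col_swap[OF det] U assms(2-7) by auto
  have rotations:
    "(F i1 j2 \<in> col_colors F n j1 \<and> F i1 j2 \<noteq> F i2 j1) \<or>
     (F i2 j2 \<in> row_colors F n i1 \<and> F i2 j2 \<noteq> F i1 j1) \<or>
     (F i2 j1 \<in> col_colors F n j2 \<and> F i2 j1 \<noteq> F i1 j2) \<or>
     (F i1 j1 \<in> row_colors F n i2 \<and> F i1 j1 \<noteq> F i2 j2)"
    "(F i1 j1 \<in> col_colors F n j2 \<and> F i1 j1 \<noteq> F i2 j2) \<or>
     (F i2 j1 \<in> row_colors F n i1 \<and> F i2 j1 \<noteq> F i1 j2) \<or>
     (F i2 j2 \<in> col_colors F n j1 \<and> F i2 j2 \<noteq> F i1 j1) \<or>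
     (F i1 j2 \<in> row_colors F n i2 \<and> F i1 j2 \<noteq> F i2 j1)"
    using determined_rectangle_rotation[OF det assms(2-7)]
      determined_rectangle_rotation[OF det assms(2-4,6,5) assms(7)[symmetric]] U by auto
  \<comment> \<open>If opposite corners carry the same colour, the rotations force a third colour common
     to the lines of some corner. Otherwise every corner shares at most one neighbour's colour
     with its two lines, so the swaps orient the four sides cyclically, and one of the two
     rotations fails.\<close>
  show False
    using at_most_two[OF cells(1) assms(2,5)] at_most_two[OF cells(2) assms(2,6)]
      at_most_two[OF cells(3) assms(3,6)] at_most_two[OF cells(4) assms(3,5)]
      swaps rotations distinct rc assms(2-7) by (smt (z3))
qed

lemma no_uncolored_staircase:
  assumes det: "determined n (2 * n - 2) F U"
    and i: "i0 < n" "i1 < n" "i2 < n" "distinct [i0, i1, i2]"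
    and j: "j0 < n" "j1 < n" "j2 < n" "distinct [j0, j1, j2]"
    and U: "{(i0, j0), (i1, j0), (i1, j1), (i2, j1), (i2, j2)} \<subseteq> U"
  shows False
proof -
  have L: "latin n (2 * n - 2) F" using det by (rule determined_latin)
  have cells: "(i0, j0) \<in> U" "(i1, j0) \<in> U" "(i1, j1) \<in> U" "(i2, j1) \<in> U" "(i2, j2) \<in> U"
    using U by auto
  have distinct:
    "distinct [F i0 j0, F i0 j1, F i0 j2]" "distinct [F i1 j0, F i1 j1, F i1 j2]"
    "distinct [F i2 j0, F i2 j1, F i2 j2]" "distinct [F i0 j0, F i1 j0, F i2 j0]"
    "distinct [F i0 j1, F i1 j1, F i2 j1]" "distinct [F i0 j2, F i1 j2, F i2 j2]"
    using latin_row_distinct[OF L] latin_col_distinct[OF L] i j by auto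
  note at_most_two = common_colors_at_most_two[OF det]
  note cover = determined_cell_cover[OF det]
  have swaps:
    "F i1 j0 \<in> row_colors F n i0 \<or> F i0 j0 \<in> row_colors F n i1"
    "F i1 j1 \<in> col_colors F n j0 \<or> F i1 j0 \<in> col_colors F n j1"
    "F i2 j1 \<in> row_colors F n i1 \<or> F i1 j1 \<in> row_colors F n i2"
    "F i2 j2 \<in> col_colors F n j1 \<or> F i2 j1 \<in> col_colors F n j2"
    using determined_row_swap[OF det] determined_col_swap[OF det] cells i j by auto
  show False
    using at_most_two[OF cells(1) i(1) j(1)] at_most_two[OF cells(2) i(2) j(1)] at_most_two[OF cells(3) i(2) j(2)]
      at_most_two[OF cells(4) i(3) j(2)] at_most_two[OF cells(5) i(3) j(3)]
      cover[OF cells(2) i(2) j(1)] cover[OF cells(3) i(2) j(2)] cover[OF cells(4) i(3) j(2)]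
      latin_range[OF L] row_colorsI[of _ n F] col_colorsI[of _ n F] swaps distinct[simplified] i j
    by (smt (z3))
qed

lemma card_uncolored_le:
  assumes det: "determined n (2 * n - 2) F U" and U: "U \<subseteq> square n"
  shows "5 * card U \<le> 8 * n"
proof (rule card_staircase_free_le)
  show U': "U \<subseteq> {..<n} \<times> {..<n}"
    using U by (simp add: square_def)
  then have lt: "i < n" "j < n" if "(i, j) \<in> U" for i j
    using that by auto
  show "card (row_cells U i) \<le> 2" for i
  proof -
    have "j1 = j2 \<or> j2 = j3 \<or> j1 = j3"
      if "j1 \<in> row_cells U i" "j2 \<in> row_cells U i" "j3 \<in> row_cells U i" for j1 j2 j3
      using that no_three_uncolored_in_row[OF det, of i j1 j2 j3] lt unfolding row_cells_def by blast
    then show ?thesis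
      using card_le_two_iff[OF finite_row_cells[OF U']] by blast
  qed
  show "card (col_cells U j) \<le> 2" for j
  proof -
    have "i1 = i2 \<or> i2 = i3 \<or> i1 = i3"
      if "i1 \<in> col_cells U j" "i2 \<in> col_cells U j" "i3 \<in> col_cells U j" for i1 i2 i3
      using that no_three_uncolored_in_col[OF det, of j i1 i2 i3] lt unfolding col_cells_def by blast
    then show ?thesis
      using card_le_two_iff[OF finite_col_cells[OF U']] by blast
  qed
  show "staircase_free U"
    unfolding staircase_free_def
  proof (intro allI impI)
    fix i0 i1 i2 j0 j1 j2
    assume cells: "(i0, j0) \<in> U" "(i1, j0) \<in> U" "(i1, j1) \<in> U" "(i2, j1) \<in> U" "(i2, j2) \<in> U"
    show "i0 = i1 \<or> i1 = i2 \<or> j0 = j1 \<or> j1 = j2"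
    proof (rule ccontr)
      assume "\<not> ?thesis"
      then have ne: "i0 \<noteq> i1" "i1 \<noteq> i2" "j0 \<noteq> j1" "j1 \<noteq> j2" by auto
      have ij: "i0 < n" "i1 < n" "i2 < n" "j0 < n" "j1 < n" "j2 < n"
        using lt cells by blast+
      consider "i0 = i2" "j0 = j2" | "i0 = i2" "j0 \<noteq> j2" | "i0 \<noteq> i2" "j0 = j2" | "i0 \<noteq> i2" "j0 \<noteq> j2"
        by blast
      then show False
      proof cases
        case 1
        show False
          by (rule no_uncolored_rectangle[OF det ij(1,2) ne(1) ij(4,5) ne(3)]) (use cells 1 in auto)
      next
        case 2
        show False
          by (rule no_three_uncolored_in_row[OF det ij(1,4,5,6) ne(3,4) 2(2)]) (use cells 2 in auto)
      next
        case 3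
        show False
          by (rule no_three_uncolored_in_col[OF det ij(4,1,2,3) ne(1,2) 3(1)]) (use cells 3 in auto)
      next
        case 4
        show False
          by (rule no_uncolored_staircase[OF det ij(1-3) _ ij(4-6)]) (use ne cells 4 in auto)
      qed
    qed
  qed
qed

section \<open>Defining sets\<close>

definition as_map :: "nat \<Rightarrow> (nat \<Rightarrow> nat \<Rightarrow> nat) \<Rightarrow> (nat \<times> nat \<rightharpoonup> nat)" where
  "as_map n G = (\<lambda>(i, j). if i < n \<and> j < n then Some (G i j) else None)"

lemma as_map_in_L_set:
  assumes "latin n k G"
  shows "as_map n G \<in> L_set n k"
proof -
  have "dom (as_map n G) = square n"
    by (auto simp: as_map_def square_def split: if_splits)
  moreover have "ran (as_map n G) \<subseteq> {1..k}"
    using latin_range[OF assms] by (auto simp: as_map_def ran_def split: if_splits)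
  ultimately show ?thesis
    using latin_row_distinct[OF assms] latin_col_distinct[OF assms]
    unfolding L_set_def by (auto simp: as_map_def)
qed

lemma L_set_as_map:
  assumes "f \<in> L_set n k"
  shows "latin n k (\<lambda>i j. the (f (i, j)))" and "f = as_map n (\<lambda>i j. the (f (i, j)))"
proof -
  have dom: "dom f = square n" and ran: "ran f \<subseteq> {1..k}"
    and rows: "\<And>i j j'. i < n \<Longrightarrow> j < n \<Longrightarrow> j' < n \<Longrightarrow> j \<noteq> j' \<Longrightarrow> f (i, j) \<noteq> f (i, j')"
    and cols: "\<And>i i' j. j < n \<Longrightarrow> i < n \<Longrightarrow> i' < n \<Longrightarrow> i \<noteq> i' \<Longrightarrow> f (i, j) \<noteq> f (i', j)"
    using assms unfolding L_set_def by auto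
  have some: "f (i, j) = Some (the (f (i, j)))" if "i < n" "j < n" for i j
  proof -
    have "(i, j) \<in> dom f" using dom that by (simp add: square_def)
    then show ?thesis by auto
  qed
  show "latin n k (\<lambda>i j. the (f (i, j)))"
  proof (rule latinI)
    show "the (f (i, j)) \<in> {1..k}" if "i < n" "j < n" for i j
      using some[OF that] ran by (metis ranI subsetD)
    show "the (f (i, j)) \<noteq> the (f (i, j'))" if "i < n" "j < n" "j' < n" "j \<noteq> j'" for i j j'
      using rows[OF that] some[OF that(1,2)] some[OF that(1,3)] by metis
    show "the (f (i, j)) \<noteq> the (f (i', j))" if "i < n" "i' < n" "j < n" "i \<noteq> i'" for i i' j
      using cols[OF that(3,1,2,4)] some[OF that(1,3)] some[OF that(2,3)] by metis
  qed
  show "f = as_map n (\<lambda>i j. the (f (i, j)))"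
  proof
    fix x :: "nat \<times> nat"
    obtain i j where x: "x = (i, j)" by fastforce
    show "f x = as_map n (\<lambda>i j. the (f (i, j))) x"
    proof (cases "i < n \<and> j < n")
      case True
      then show ?thesis using some[of i j] x by (simp add: as_map_def)
    next
      case False
      then have "x \<notin> dom f" using dom x by (simp add: square_def)
      then show ?thesis using False x by (simp add: as_map_def domIff)
    qed
  qed
qed

lemma defining_set_determined:
  assumes "partial_coloring n k P" "uniquely_extends n k P"
  obtains F where "determined n k F (square n - dom P)"
proof -
  obtain f where f: "f \<in> L_set n k" "P \<subseteq>\<^sub>m f"
    and unique: "\<And>g. g \<in> L_set n k \<Longrightarrow> P \<subseteq>\<^sub>m g \<Longrightarrow> g = f"
    using assms(2) unfolding uniquely_extends_def by blast
  have dom_P: "dom P \<subseteq> square n"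
    using assms(1) by (simp add: partial_coloring_def)
  define F where "F i j = the (f (i, j))" for i j
  have f_eq: "f = as_map n F"
    unfolding F_def by (rule L_set_as_map(2)[OF f(1)])
  have "determined n k F (square n - dom P)"
    unfolding determined_def
  proof (intro conjI allI impI)
    show "latin n k F"
      unfolding F_def by (rule L_set_as_map(1)[OF f(1)])
    fix G i j
    assume G: "latin n k G" and agree: "\<forall>i<n. \<forall>j<n. (i, j) \<notin> square n - dom P \<longrightarrow> G i j = F i j"
      and "i < n" "j < n"
    have "P x = as_map n G x" if "x \<in> dom P" for x
    proof -
      obtain a b where x: "x = (a, b)" by fastforce
      with that dom_P have "a < n" "b < n" by (auto simp: square_def)
      with agree that x have "as_map n G x = f x"
        by (simp add: f_eq as_map_def)
      with f(2) that show ?thesis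
        by (simp add: map_le_def)
    qed
    then have "as_map n G = f"
      by (intro unique as_map_in_L_set G) (simp add: map_le_def)
    then have "as_map n G (i, j) = as_map n F (i, j)"
      by (simp add: f_eq)
    then show "G i j = F i j"
      using \<open>i < n\<close> \<open>j < n\<close> by (simp add: as_map_def)
  qed
  then show ?thesis
    by (rule that)
qed

lemma defining_set_exists:
  assumes "2 \<le> n"
  shows "\<exists>P. partial_coloring n (2 * n - 2) P \<and> uniquely_extends n (2 * n - 2) P"
proof -
  define G where "G i j = (i + j) mod n + 1" for i j
  have cyclic: "(i + j) mod n = (if i + j < n then i + j else i + j - n)" if "i < n" "j < n" for i j
    using that by (simp add: mod_if)
  have "latin n (2 * n - 2) G"
  proof (rule latinI)
    show "G i j \<in> {1..2 * n - 2}" if "i < n" "j < n" for i j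
    proof -
      have "(i + j) mod n < n" using assms by simp
      then have "(i + j) mod n + 1 \<le> 2 * n - 2" using assms by linarith
      then show ?thesis by (simp add: G_def)
    qed
    show "G i j \<noteq> G i j'" if "i < n" "j < n" "j' < n" "j \<noteq> j'" for i j j'
      using that cyclic[of i j] cyclic[of i j'] by (simp add: G_def split: if_splits)
    show "G i j \<noteq> G i' j" if "i < n" "i' < n" "j < n" "i \<noteq> i'" for i i' j
      using that cyclic[of i j] cyclic[of i' j] by (simp add: G_def split: if_splits)
  qed
  then have full: "as_map n G \<in> L_set n (2 * n - 2)"
    by (rule as_map_in_L_set)
  have "g = as_map n G" if "g \<in> L_set n (2 * n - 2)" "as_map n G \<subseteq>\<^sub>m g" for g
  proof
    fix x
    have "dom g = dom (as_map n G)"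
      using that(1) full by (simp add: L_set_def)
    then show "g x = as_map n G x"
      using that(2) unfolding map_le_def by (metis domIff)
  qed
  then have "uniquely_extends n (2 * n - 2) (as_map n G)"
    using full by (auto simp: uniquely_extends_def)
  moreover have "partial_coloring n (2 * n - 2) (as_map n G)"
    using full by (simp add: partial_coloring_def L_set_def)
  ultimately show ?thesis
    by blast
qed

lemma card_defining_set_ge:
  assumes "partial_coloring n (2 * n - 2) P" "uniquely_extends n (2 * n - 2) P"
  shows "n * n \<le> card (dom P) + 8 * n div 5"
proof -
  obtain F where "determined n (2 * n - 2) F (square n - dom P)"
    using defining_set_determined[OF assms] .
  then have "5 * card (square n - dom P) \<le> 8 * n"
    by (rule card_uncolored_le) auto
  then have "card (square n - dom P) \<le> 8 * n div 5"
    by (simp add: less_eq_div_iff_mult_less_eq)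
  moreover have "card (square n - dom P) + card (dom P) = n * n"
  proof -
    have sub: "dom P \<subseteq> square n"
      using assms(1) by (simp add: partial_coloring_def)
    have fin: "finite (square n)" and card: "card (square n) = n * n"
      by (simp_all add: square_def card_cartesian_product)
    show ?thesis
      using card_Diff_subset[OF finite_subset[OF sub fin] sub] card_mono[OF fin sub] card by simp
  qed
  ultimately show ?thesis
    by linarith
qed

theorem mainTheorem2:
  fixes n :: nat
  assumes "n \<ge> 1"
  shows "int (defining_number n (2*n - 2)) \<ge> int (n^2) - \<lfloor>8 * real n / 5\<rfloor>"
proof (cases "n = 1")
  case True
  \<comment> \<open>There are no colours, hence no defining sets, and \<open>Inf {} = 0\<close>.\<close>
  then show ?thesis by simp
next
  case False
  with assms have "2 \<le> n" by simp
  have "defining_number n (2 * n - 2)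
      \<in> {card (dom P) | P. partial_coloring n (2 * n - 2) P \<and> uniquely_extends n (2 * n - 2) P}"
    unfolding defining_number_def using defining_set_exists[OF \<open>2 \<le> n\<close>] by (intro Inf_nat_def1) auto
  then have "n^2 \<le> defining_number n (2 * n - 2) + 8 * n div 5"
    using card_defining_set_ge by (auto simp: power2_eq_square)
  then have "int (n^2) \<le> int (defining_number n (2 * n - 2)) + int (8 * n div 5)"
    by linarith
  moreover have "\<lfloor>8 * real n / 5\<rfloor> = int (8 * n div 5)"
    using floor_divide_of_nat_eq[of "8 * n" 5] by simp
  ultimately show ?thesis
    by linarith
qed

end
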